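(* Let $G$ be a finite group such that every element of prime order of $\mathrm{V}(\mathbb{Z}G)$ is rationally conjugate to an element of $G$ (i.e. for each such $u$ there are $g\in G$ and a unit $x\in\mathbb{Q}G$ with $x^{-1}ux=g$). Let $R$ be a field of characteristic zero, let $G\to \mathrm{GL}(n,R)$ be an injective group homomorphism, and let $\tau:\mathbb{Q}G\to M_n(R)$ be its unique extension to a ring homomorphism. Let $K$ be the kernel of the group homomorphism $\tau|_{\mathrm{U}(\mathbb{Q}G)}:\mathrm{U}(\mathbb{Q}G)\to\mathrm{GL}(n,R)$. Then $K\cap\mathrm{V}(\mathbb{Z}G)$ is torsion-free.
   Context: $\mathrm{U}(\mathbb{Q}G)$ denotes the unit group of the rational group algebra $\mathbb{Q}G$, and $\mathrm{V}(\mathbb{Z}G)$ the group of units of augmentation $1$ in $\mathbb{Z}G$ (augmentation of $\sum_g z_g g$ being $\sum_g z_g$). *)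

theory Defs
  imports "HOL-Algebra.Group" "Jordan_Normal_Form.Matrix"
begin

text \<open>Rational group algebra QG of a finite group G: functions carrier G -> rat,
  zero outside the carrier. ZG: those with integer coefficients.\<close>

definition QG :: "('a, 'b) monoid_scheme \<Rightarrow> ('a \<Rightarrow> rat) set" where
  "QG G = {a. \<forall>x. x \<notin> carrier G \<longrightarrow> a x = 0}"

definition ZG :: "('a, 'b) monoid_scheme \<Rightarrow> ('a \<Rightarrow> rat) set" where
  "ZG G = {a \<in> QG G. \<forall>x. a x \<in> \<int>}"

definition gr_mult :: "('a, 'b) monoid_scheme \<Rightarrow> ('a \<Rightarrow> rat) \<Rightarrow> ('a \<Rightarrow> rat) \<Rightarrow> ('a \<Rightarrow> rat)" where
  "gr_mult G a b = (\<lambda>x. if x \<in> carrier G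
      then (\<Sum>g\<in>carrier G. a g * b (inv\<^bsub>G\<^esub> g \<otimes>\<^bsub>G\<^esub> x)) else 0)"

definition gr_of :: "('a, 'b) monoid_scheme \<Rightarrow> 'a \<Rightarrow> ('a \<Rightarrow> rat)" where
  "gr_of G g = (\<lambda>x. if x = g then 1 else 0)"

definition gr_one :: "('a, 'b) monoid_scheme \<Rightarrow> ('a \<Rightarrow> rat)" where
  "gr_one G = gr_of G \<one>\<^bsub>G\<^esub>"

primrec gr_pow :: "('a, 'b) monoid_scheme \<Rightarrow> ('a \<Rightarrow> rat) \<Rightarrow> nat \<Rightarrow> ('a \<Rightarrow> rat)" where
  "gr_pow G a 0 = gr_one G"
| "gr_pow G a (Suc n) = gr_mult G (gr_pow G a n) a"

definition augmentation :: "('a, 'b) monoid_scheme \<Rightarrow> ('a \<Rightarrow> rat) \<Rightarrow> rat" where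
  "augmentation G a = (\<Sum>g\<in>carrier G. a g)"

definition UQG :: "('a, 'b) monoid_scheme \<Rightarrow> ('a \<Rightarrow> rat) set" where
  "UQG G = {a \<in> QG G. \<exists>b \<in> QG G. gr_mult G a b = gr_one G \<and> gr_mult G b a = gr_one G}"

definition VZG :: "('a, 'b) monoid_scheme \<Rightarrow> ('a \<Rightarrow> rat) set" where
  "VZG G = {a \<in> ZG G. (\<exists>b \<in> ZG G. gr_mult G a b = gr_one G \<and> gr_mult G b a = gr_one G)
              \<and> augmentation G a = 1}"

definition has_prime_order :: "('a, 'b) monoid_scheme \<Rightarrow> ('a \<Rightarrow> rat) \<Rightarrow> bool" where
  "has_prime_order G u \<longleftrightarrow> (\<exists>p::nat. prime p \<and> gr_pow G u p = gr_one G \<and> u \<noteq> gr_one G)"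

definition rationally_conj_to_group_elt :: "('a, 'b) monoid_scheme \<Rightarrow> ('a \<Rightarrow> rat) \<Rightarrow> bool" where
  "rationally_conj_to_group_elt G u \<longleftrightarrow>
     (\<exists>g \<in> carrier G. \<exists>x \<in> QG G. \<exists>y \<in> QG G.
        gr_mult G x y = gr_one G \<and> gr_mult G y x = gr_one G \<and>
        gr_mult G (gr_mult G y u) x = gr_of G g)"

definition tau :: "('a, 'b) monoid_scheme \<Rightarrow> nat \<Rightarrow> ('a \<Rightarrow> 'r::field_char_0 mat) \<Rightarrow> ('a \<Rightarrow> rat) \<Rightarrow> 'r mat" where
  "tau G n \<rho> a = mat n n (\<lambda>(i,j). \<Sum>g\<in>carrier G. of_rat (a g) * (\<rho> g $$ (i,j)))"

definition gr_torsion_free :: "('a, 'b) monoid_scheme \<Rightarrow> ('a \<Rightarrow> rat) set \<Rightarrow> bool" where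
  "gr_torsion_free G S \<longleftrightarrow> (\<forall>u \<in> S. \<forall>m::nat. m > 0 \<and> gr_pow G u m = gr_one G \<longrightarrow> u = gr_one G)"

end

theory Submission
  imports Defs "HOL-Computational_Algebra.Primes"
begin

text \<open>
  The extension \<open>\<tau>\<close> of a representation \<open>\<rho>\<close> is multiplicative, so its kernel is closed under
  powers, and a nontrivial torsion unit has a power of prime order. It therefore suffices to
  show that a unit \<open>v \<in> V(\<int>G)\<close> of prime order with \<open>\<tau> v = 1\<close> is trivial. By hypothesis
  \<open>y v x = g\<close> for a group element \<open>g\<close> and mutually inverse \<open>x, y \<in> \<rat>G\<close>; applying \<open>\<tau>\<close> gives
  \<open>\<rho> g = \<tau> y \<tau> x = 1\<close>, so \<open>g = 1\<close> by faithfulness of \<open>\<rho>\<close>, and then \<open>v = x y = 1\<close>.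
\<close>

lemma invertible_idempotent_mat_eq_one:
  fixes A :: "'a::semiring_1 mat"
  assumes A: "A \<in> carrier_mat n n" and "invertible_mat A" and idem: "A * A = A"
  shows "A = 1\<^sub>m n"
proof -
  obtain B where AB: "A * B = 1\<^sub>m n" and BA: "B * A = 1\<^sub>m (dim_row B)"
    using assms(2) A unfolding invertible_mat_def inverts_mat_def by auto
  have "dim_col B = n" using arg_cong[OF AB, of dim_col] by simp
  moreover have "dim_row B = n" using arg_cong[OF BA, of dim_col] A by simp
  ultimately have B: "B \<in> carrier_mat n n" by blast
  have "A = A * (A * B)" using AB A by simp
  also have "\<dots> = A * B" using A B idem by (simp add: assoc_mult_mat[symmetric])
  finally show ?thesis using AB by simp
qed

lemma gr_mult_QG: "gr_mult G a b \<in> QG G"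
  by (simp add: gr_mult_def QG_def)

lemma gr_mult_ZG: "a \<in> ZG G \<Longrightarrow> b \<in> ZG G \<Longrightarrow> gr_mult G a b \<in> ZG G"
  using gr_mult_QG[of G a b] by (auto simp: ZG_def gr_mult_def intro!: Ints_mult)

context group
begin

lemma sum_carrier_cmult_reindex:
  assumes "g \<in> carrier G"
  shows "(\<Sum>h\<in>carrier G. f h) = (\<Sum>k\<in>carrier G. f (g \<otimes> k))"
  using sum.reindex[OF inj_on_cmult[OF assms], of f] surj_const_mult[OF assms] by simp

lemma gr_one_QG: "gr_one G \<in> QG G"
  by (simp add: gr_one_def gr_of_def QG_def)

lemma gr_one_ZG: "gr_one G \<in> ZG G"
  using gr_one_QG by (auto simp add: ZG_def gr_one_def gr_of_def)

lemma gr_pow_QG: "gr_pow G a k \<in> QG G"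
  by (cases k) (auto simp: gr_one_QG gr_mult_QG)

lemma gr_pow_ZG: "a \<in> ZG G \<Longrightarrow> gr_pow G a k \<in> ZG G"
  by (induction k) (auto simp: gr_one_ZG gr_mult_ZG)

lemma gr_mult_assoc: "gr_mult G (gr_mult G a b) c = gr_mult G a (gr_mult G b c)"
proof (rule ext)
  fix x
  show "gr_mult G (gr_mult G a b) c x = gr_mult G a (gr_mult G b c) x"
  proof (cases "x \<in> carrier G")
    case False
    then show ?thesis by (simp add: gr_mult_def)
  next
    case x: True
    have "gr_mult G (gr_mult G a b) c x
        = (\<Sum>h\<in>carrier G. (\<Sum>g\<in>carrier G. a g * b (inv g \<otimes> h)) * c (inv h \<otimes> x))"
      using x by (simp add: gr_mult_def)
    also have "\<dots> = (\<Sum>g\<in>carrier G. \<Sum>h\<in>carrier G. a g * b (inv g \<otimes> h) * c (inv h \<otimes> x))"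
      by (simp add: sum_distrib_right) (rule sum.swap)
    also have "\<dots> = (\<Sum>g\<in>carrier G. \<Sum>k\<in>carrier G. a g * b k * c (inv k \<otimes> (inv g \<otimes> x)))"
    proof (rule sum.cong[OF refl])
      fix g assume g: "g \<in> carrier G"
      show "(\<Sum>h\<in>carrier G. a g * b (inv g \<otimes> h) * c (inv h \<otimes> x))
          = (\<Sum>k\<in>carrier G. a g * b k * c (inv k \<otimes> (inv g \<otimes> x)))"
        using g x by (subst sum_carrier_cmult_reindex[OF g])
          (simp add: m_assoc[symmetric] inv_mult_group)
    qed
    also have "\<dots> = gr_mult G a (gr_mult G b c) x"
      using x by (simp add: gr_mult_def sum_distrib_left mult.assoc)
    finally show ?thesis .
  qed
qed

lemma sum_gr_mult_weighted:
  fixes F :: "'a \<Rightarrow> 'r::field_char_0"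
  shows "(\<Sum>x\<in>carrier G. of_rat (gr_mult G a b x) * F x)
       = (\<Sum>g\<in>carrier G. \<Sum>h\<in>carrier G. of_rat (a g) * of_rat (b h) * F (g \<otimes> h))"
proof -
  have "(\<Sum>x\<in>carrier G. of_rat (gr_mult G a b x) * F x)
      = (\<Sum>x\<in>carrier G. \<Sum>g\<in>carrier G. of_rat (a g) * of_rat (b (inv g \<otimes> x)) * F x)"
    by (simp add: gr_mult_def of_rat_sum of_rat_mult sum_distrib_right)
  also have "\<dots> = (\<Sum>g\<in>carrier G. \<Sum>x\<in>carrier G. of_rat (a g) * of_rat (b (inv g \<otimes> x)) * F x)"
    by (rule sum.swap)
  also have "\<dots> = (\<Sum>g\<in>carrier G. \<Sum>h\<in>carrier G. of_rat (a g) * of_rat (b h) * F (g \<otimes> h))"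
  proof (rule sum.cong[OF refl])
    fix g assume g: "g \<in> carrier G"
    show "(\<Sum>x\<in>carrier G. of_rat (a g) * of_rat (b (inv g \<otimes> x)) * F x)
        = (\<Sum>h\<in>carrier G. of_rat (a g) * of_rat (b h) * F (g \<otimes> h))"
      using g by (subst sum_carrier_cmult_reindex[OF g]) (simp add: m_assoc[symmetric])
  qed
  finally show ?thesis .
qed

end

locale finite_group = group G for G (structure) +
  assumes finite_carrier: "finite (carrier G)"
begin

lemma gr_one_mult: "a \<in> QG G \<Longrightarrow> gr_mult G (gr_one G) a = a"
  using finite_carrier by (auto simp: gr_mult_def gr_one_def gr_of_def QG_def of_bool_def[symmetric])

lemma gr_mult_one: "a \<in> QG G \<Longrightarrow> gr_mult G a (gr_one G) = a"
proof (rule ext)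
  fix x assume a: "a \<in> QG G"
  have "inv g \<otimes> x = \<one> \<longleftrightarrow> g = x" if "g \<in> carrier G" "x \<in> carrier G" for g
  proof
    assume "inv g \<otimes> x = \<one>"
    then have "g \<otimes> (inv g \<otimes> x) = g" using that by simp
    then show "g = x" using that by (simp add: m_assoc[symmetric])
  qed (use that in simp)
  then show "gr_mult G a (gr_one G) x = a x"
    using a finite_carrier
    by (auto simp: gr_mult_def gr_one_def gr_of_def QG_def of_bool_def[symmetric] cong: sum.cong)
qed

lemma gr_pow_1: "a \<in> QG G \<Longrightarrow> gr_pow G a 1 = a"
  by (simp add: gr_one_mult)

lemma gr_pow_add: "a \<in> QG G \<Longrightarrow> gr_pow G a (m + k) = gr_mult G (gr_pow G a m) (gr_pow G a k)"
  by (induction k) (simp_all add: gr_mult_one gr_pow_QG gr_mult_assoc)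

lemma gr_pow_mult: "a \<in> QG G \<Longrightarrow> gr_pow G a (m * k) = gr_pow G (gr_pow G a m) k"
proof (induction k)
  case (Suc k)
  have "gr_pow G a (m * Suc k) = gr_mult G (gr_pow G a (m * k)) (gr_pow G a m)"
    using gr_pow_add[OF Suc.prems, of "m * k" m] by (simp add: add.commute)
  then show ?case using Suc by simp
qed simp

lemma augmentation_gr_mult:
  "augmentation G (gr_mult G a b) = augmentation G a * augmentation G b"
  using sum_gr_mult_weighted[of a b "\<lambda>_. 1 :: rat"]
  by (simp add: augmentation_def sum_product
      sum_carrier_cmult_reindex[symmetric, where f = b] cong: sum.cong)

lemma augmentation_gr_one: "augmentation G (gr_one G) = 1"
  using finite_carrier by (simp add: augmentation_def gr_one_def gr_of_def)

lemma augmentation_gr_pow: "augmentation G (gr_pow G a k) = augmentation G a ^ k"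
  by (induction k) (simp_all add: augmentation_gr_mult augmentation_gr_one)

lemma finite_order_in_VZG:
  assumes "a \<in> ZG G" "augmentation G a = 1" "0 < m" "gr_pow G a m = gr_one G"
  shows "a \<in> VZG G"
proof -
  obtain k where m: "m = Suc k" using assms(3) gr0_implies_Suc by blast
  have "a \<in> QG G" using assms(1) by (simp add: ZG_def)
  then have "gr_mult G a (gr_pow G a k) = gr_one G"
    using gr_pow_add[of a 1 k] gr_pow_1 assms(4) m by simp
  moreover have "gr_mult G (gr_pow G a k) a = gr_one G"
    using assms(4) m by simp
  ultimately show ?thesis
    using assms gr_pow_ZG unfolding VZG_def by blast
qed

lemma conj_eq_one_imp_eq_one:
  assumes "a \<in> QG G" "y \<in> QG G"
    and xy: "gr_mult G x y = gr_one G"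
    and conj: "gr_mult G (gr_mult G y a) x = gr_one G"
  shows "a = gr_one G"
proof -
  have "a = gr_mult G (gr_one G) (gr_mult G a (gr_one G))"
    using assms(1) by (simp add: gr_one_mult gr_mult_one)
  also have "\<dots> = gr_mult G x (gr_mult G (gr_mult G (gr_mult G y a) x) y)"
    by (simp only: gr_mult_assoc xy[symmetric])
  also have "\<dots> = gr_one G"
    using conj xy assms(2) by (simp add: gr_one_mult)
  finally show ?thesis .
qed

lemma exists_prime_order_power:
  assumes "a \<in> QG G" "a \<noteq> gr_one G"
  shows "0 < m \<Longrightarrow> gr_pow G a m = gr_one G \<Longrightarrow> \<exists>k. has_prime_order G (gr_pow G a k)"
proof (induction m rule: less_induct)
  case (less m)
  have "m \<noteq> 1" using less.prems assms gr_pow_1 by auto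
  then obtain p where p: "prime p" "p dvd m" using prime_factor_nat by blast
  then obtain k where m: "m = k * p" by (metis dvdE mult.commute)
  have "0 < k" "k < m"
    using less.prems(1) p(1) m prime_gt_1_nat by (auto intro!: nat_mult_less_cancel1)
  show ?case
  proof (cases "gr_pow G a k = gr_one G")
    case True
    then show ?thesis using less.IH[OF \<open>k < m\<close> \<open>0 < k\<close>] by blast
  next
    case False
    have "gr_pow G (gr_pow G a k) p = gr_one G"
      using gr_pow_mult[OF assms(1), of k p] m less.prems(2) by simp
    then show ?thesis using p(1) False unfolding has_prime_order_def by blast
  qed
qed

end

locale matrix_representation = finite_group G for G (structure) +
  fixes n :: nat and \<rho> :: "'a \<Rightarrow> 'r::field_char_0 mat"
  assumes rep_carrier_mat: "g \<in> carrier G \<Longrightarrow> \<rho> g \<in> carrier_mat n n"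
    and rep_mult: "g \<in> carrier G \<Longrightarrow> h \<in> carrier G \<Longrightarrow> \<rho> (g \<otimes> h) = \<rho> g * \<rho> h"
    and rep_one: "\<rho> \<one> = 1\<^sub>m n"
begin

lemma tau_carrier_mat: "tau G n \<rho> a \<in> carrier_mat n n"
  by (simp add: tau_def)

lemma tau_gr_mult: "tau G n \<rho> (gr_mult G a b) = tau G n \<rho> a * tau G n \<rho> b"
proof (rule eq_matI)
  fix i j assume "i < dim_row (tau G n \<rho> a * tau G n \<rho> b)" "j < dim_col (tau G n \<rho> a * tau G n \<rho> b)"
  then have ij: "i < n" "j < n" by (auto simp: tau_def)
  have "tau G n \<rho> (gr_mult G a b) $$ (i,j)
      = (\<Sum>g\<in>carrier G. \<Sum>h\<in>carrier G. of_rat (a g) * of_rat (b h) * \<rho> (g \<otimes> h) $$ (i,j))"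
    using ij sum_gr_mult_weighted[of a b "\<lambda>x. \<rho> x $$ (i,j)"] by (simp add: tau_def)
  also have "\<dots> = (\<Sum>g\<in>carrier G. \<Sum>h\<in>carrier G. \<Sum>k<n.
      (of_rat (a g) * \<rho> g $$ (i,k)) * (of_rat (b h) * \<rho> h $$ (k,j)))"
  proof (intro sum.cong refl)
    fix g h assume g: "g \<in> carrier G" and h: "h \<in> carrier G"
    have "\<rho> (g \<otimes> h) $$ (i,j) = (\<Sum>k<n. \<rho> g $$ (i,k) * \<rho> h $$ (k,j))"
      using ij carrier_matD[OF rep_carrier_mat[OF g]] carrier_matD[OF rep_carrier_mat[OF h]]
      by (simp add: rep_mult g h scalar_prod_def atLeast0LessThan)
    then show "of_rat (a g) * of_rat (b h) * \<rho> (g \<otimes> h) $$ (i,j)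
        = (\<Sum>k<n. (of_rat (a g) * \<rho> g $$ (i,k)) * (of_rat (b h) * \<rho> h $$ (k,j)))"
      by (simp add: sum_distrib_left mult_ac)
  qed
  also have "\<dots> = (\<Sum>k<n. \<Sum>g\<in>carrier G. \<Sum>h\<in>carrier G.
      (of_rat (a g) * \<rho> g $$ (i,k)) * (of_rat (b h) * \<rho> h $$ (k,j)))"
    by (subst sum.swap) (simp add: sum.swap[of _ "carrier G" "{..<n}"])
  also have "\<dots> = (\<Sum>k<n. tau G n \<rho> a $$ (i,k) * tau G n \<rho> b $$ (k,j))"
    using ij by (intro sum.cong refl) (simp add: tau_def sum_product)
  also have "\<dots> = (tau G n \<rho> a * tau G n \<rho> b) $$ (i,j)"
    using ij by (simp add: tau_def scalar_prod_def atLeast0LessThan)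
  finally show "tau G n \<rho> (gr_mult G a b) $$ (i,j) = (tau G n \<rho> a * tau G n \<rho> b) $$ (i,j)" .
qed (simp_all add: tau_def)

lemma tau_gr_of: "g \<in> carrier G \<Longrightarrow> tau G n \<rho> (gr_of G g) = \<rho> g"
  using rep_carrier_mat[of g] finite_carrier
  by (intro eq_matI) (auto simp: tau_def gr_of_def if_distrib[of of_rat] if_distrib[where f = "\<lambda>z. z * _"]
      cong: if_cong)

lemma tau_gr_one: "tau G n \<rho> (gr_one G) = 1\<^sub>m n"
  by (simp add: gr_one_def tau_gr_of rep_one)

lemma tau_gr_pow_eq_one:
  assumes "tau G n \<rho> a = 1\<^sub>m n"
  shows "tau G n \<rho> (gr_pow G a k) = 1\<^sub>m n"
  by (induction k) (simp_all add: tau_gr_one tau_gr_mult assms)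

lemma rationally_conj_in_kernel_eq_one:
  assumes "inj_on \<rho> (carrier G)" "a \<in> QG G"
    and ker: "tau G n \<rho> a = 1\<^sub>m n" and "rationally_conj_to_group_elt G a"
  shows "a = gr_one G"
proof -
  obtain g x y where g: "g \<in> carrier G" and "x \<in> QG G" "y \<in> QG G"
    and xy: "gr_mult G x y = gr_one G" and yx: "gr_mult G y x = gr_one G"
    and conj: "gr_mult G (gr_mult G y a) x = gr_of G g"
    using assms(4) unfolding rationally_conj_to_group_elt_def by blast
  have "\<rho> g = tau G n \<rho> y * tau G n \<rho> a * tau G n \<rho> x"
    using conj g by (metis tau_gr_of tau_gr_mult)
  also have "\<dots> = tau G n \<rho> (gr_mult G y x)"
    using ker tau_carrier_mat[of y] by (simp add: tau_gr_mult)
  finally have "\<rho> g = \<rho> \<one>"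
    using yx by (simp add: tau_gr_one rep_one)
  then have "g = \<one>" using assms(1) g by (simp add: inj_on_eq_iff)
  then show ?thesis
    using conj_eq_one_imp_eq_one[OF assms(2) \<open>y \<in> QG G\<close> xy] conj by (simp add: gr_one_def)
qed

end

theorem mainTheorem8:
  fixes G :: "('a, 'b) monoid_scheme"
    and n :: nat
    and \<rho> :: "'a \<Rightarrow> 'r::field_char_0 mat"
  assumes "group G"
    and "finite (carrier G)"
    and "\<forall>u \<in> VZG G. has_prime_order G u \<longrightarrow> rationally_conj_to_group_elt G u"
    and "\<forall>g \<in> carrier G. \<rho> g \<in> carrier_mat n n \<and> invertible_mat (\<rho> g)"
    and "\<forall>g \<in> carrier G. \<forall>h \<in> carrier G. \<rho> (g \<otimes>\<^bsub>G\<^esub> h) = \<rho> g * \<rho> h"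
    and "inj_on \<rho> (carrier G)"
  shows "gr_torsion_free G ({u \<in> UQG G. tau G n \<rho> u = 1\<^sub>m n} \<inter> VZG G)"
proof -
  have "\<rho> \<one>\<^bsub>G\<^esub> = 1\<^sub>m n"
    using assms(1,4,5) by (metis group.is_monoid monoid.l_one monoid.one_closed
        invertible_idempotent_mat_eq_one)
  then interpret matrix_representation G n \<rho>
    using assms unfolding matrix_representation_def matrix_representation_axioms_def
      finite_group_def finite_group_axioms_def by auto
  show ?thesis unfolding gr_torsion_free_def
  proof (intro ballI allI impI, rule ccontr)
    fix u m assume u: "u \<in> {u \<in> UQG G. tau G n \<rho> u = 1\<^sub>m n} \<inter> VZG G"
      and m: "0 < m \<and> gr_pow G u m = gr_one G" and "u \<noteq> gr_one G"
    then have uZ: "u \<in> ZG G" and aug: "augmentation G u = 1" and ker: "tau G n \<rho> u = 1\<^sub>m n"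
      by (auto simp: VZG_def)
    then obtain k where prime_order: "has_prime_order G (gr_pow G u k)"
      using exists_prime_order_power[of u m] m \<open>u \<noteq> gr_one G\<close> by (auto simp: ZG_def)
    then obtain p where "prime p" "gr_pow G (gr_pow G u k) p = gr_one G"
      unfolding has_prime_order_def by blast
    then have "gr_pow G u k \<in> VZG G"
      using finite_order_in_VZG[of "gr_pow G u k" p] gr_pow_ZG[OF uZ] aug
      by (simp add: augmentation_gr_pow prime_gt_0_nat)
    then have "gr_pow G u k = gr_one G"
      using rationally_conj_in_kernel_eq_one assms(3,6) prime_order gr_pow_QG tau_gr_pow_eq_one[OF ker]
      by blast
    then show False using prime_order unfolding has_prime_order_def by blast
  qed
qed

end
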